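(* Let $n,m_1,\dots,m_n,M\in\mathbb{N}$, let $L=\mathrm{lcm}(m_1,\dots,m_n)$, and write $M=Lk+l$ with $k,l\in\mathbb{Z}^{\ge0}$, $l<L$, and $(n+1)L-(1+m_1+\dots+m_n)=LN+N'$ with $N,N'\in\mathbb{Z}^{\ge0}$, $N'<L$. Then the number of solutions of $$a_0+m_1a_1+\dots+m_na_n=M,\qquad a_0,\dots,a_n\in\mathbb{Z}^{\ge0},$$ equals $\sum_{i=0}^{N} d_{li}\binom{n-i+k}{n}$, where $d_{li}$ denotes the number of solutions of $$l_0+m_1l_1+\dots+m_nl_n=Li+l,\quad l_0\in\{0,\dots,L-1\},\ l_j\in\{0,\dots,L/m_j-1\}\ (j=1,\dots,n).$$
   Context: $\binom{a}{b}$ denotes the binomial coefficient, taken to be $0$ when $0\le a<b$. *)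

theory Defs
  imports Main
begin

definition num_solutions :: "nat \<Rightarrow> (nat \<Rightarrow> nat) \<Rightarrow> nat \<Rightarrow> nat" where
  "num_solutions n m M =
     card {a :: nat \<Rightarrow> nat. (\<forall>j>n. a j = 0) \<and> a 0 + (\<Sum>j=1..n. m j * a j) = M}"

definition d_coeff :: "nat \<Rightarrow> (nat \<Rightarrow> nat) \<Rightarrow> nat \<Rightarrow> nat \<Rightarrow> nat \<Rightarrow> nat" where
  "d_coeff n m L l i =
     card {v :: nat \<Rightarrow> nat. (\<forall>j>n. v j = 0) \<and> v 0 < L \<and> (\<forall>j\<in>{1..n}. v j < L div m j)
            \<and> v 0 + (\<Sum>j=1..n. m j * v j) = L * i + l}"

end

theory Submission
  imports Defs
begin

text \<open>Divide every coordinate a_j by L/m_j (with m_0 = 1): the remainders form a reduced solution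
  of weight L i + l, the quotients sum to k - i and can be chosen freely, in binomial(k - i + n, n)
  ways. Since the reduced weight is at most (n+1)L - (1 + m_1 + ... + m_n) = L N + N', only
  i \<le> N occurs.\<close>

lemma sum_atMost_split_0:
  fixes f :: "nat \<Rightarrow> 'a::comm_monoid_add"
  shows "(\<Sum>j\<le>n. f j) = f 0 + (\<Sum>j=1..n. f j)"
  by (simp add: atMost_atLeast0 flip: atLeastAtMost_insertL)

definition weighted_solutions :: "nat \<Rightarrow> (nat \<Rightarrow> nat) \<Rightarrow> nat \<Rightarrow> (nat \<Rightarrow> nat) set" where
  "weighted_solutions n c t = {a. (\<forall>j>n. a j = 0) \<and> (\<Sum>j\<le>n. c j * a j) = t}"

definition reduced_solutions :: "nat \<Rightarrow> (nat \<Rightarrow> nat) \<Rightarrow> nat \<Rightarrow> nat \<Rightarrow> (nat \<Rightarrow> nat) set" where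
  "reduced_solutions n c L t = {v \<in> weighted_solutions n c t. \<forall>j\<le>n. v j < L div c j}"

lemma card_weighted_solutions_unit:
  "card (weighted_solutions n (\<lambda>_. 1) s) = (s + n) choose n"
proof -
  let ?Q = "weighted_solutions n (\<lambda>_. 1) s"
  let ?Lst = "{xs :: nat list. length xs = Suc n \<and> sum_list xs = s}"
  have sum_list_map: "sum_list (map q [0..<Suc n]) = (\<Sum>j\<le>n. q j)" for q :: "nat \<Rightarrow> nat"
    by (simp add: sum_list_sum_nth atLeast0LessThan lessThan_Suc_atMost del: upt_Suc)
  have "bij_betw (\<lambda>q. map q [0..<Suc n]) ?Q ?Lst"
  proof (rule bij_betw_byWitness[where f' = "\<lambda>xs j. if j \<le> n then xs ! j else 0"])
    show "\<forall>q\<in>?Q. (\<lambda>j. if j \<le> n then map q [0..<Suc n] ! j else 0) = q"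
      by (auto simp: weighted_solutions_def fun_eq_iff less_Suc_eq_le simp del: upt_Suc)
    show "\<forall>xs\<in>?Lst. map (\<lambda>j. if j \<le> n then xs ! j else 0) [0..<Suc n] = xs"
      by (auto intro!: nth_equalityI simp del: upt_Suc)
    show "(\<lambda>q. map q [0..<Suc n]) ` ?Q \<subseteq> ?Lst"
      by (auto simp: weighted_solutions_def sum_list_map simp del: upt_Suc)
    show "(\<lambda>xs j. if j \<le> n then xs ! j else 0) ` ?Lst \<subseteq> ?Q"
    proof
      fix q assume "q \<in> (\<lambda>xs j. if j \<le> n then xs ! j else 0) ` ?Lst"
      then obtain xs where len: "length xs = Suc n" and sum: "sum_list xs = s"
        and q: "q = (\<lambda>j. if j \<le> n then xs ! j else 0)" by blast
      have "map q [0..<Suc n] = xs"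
        using len q by (auto intro!: nth_equalityI simp del: upt_Suc)
      then show "q \<in> ?Q"
        using sum sum_list_map[of q] q by (simp add: weighted_solutions_def)
    qed
  qed
  then have "card ?Q = card ?Lst" by (rule bij_betw_same_card)
  also have "\<dots> = (s + n) choose s" by (simp add: card_length_sum_list)
  also have "\<dots> = (s + n) choose n" by (simp add: binomial_symmetric[of s "s + n"])
  finally show ?thesis .
qed

lemma weighted_sum_div_mod:
  fixes c a :: "nat \<Rightarrow> nat"
  assumes "\<forall>j\<le>n. c j dvd L"
  shows "(\<Sum>j\<le>n. c j * a j)
    = L * (\<Sum>j\<le>n. a j div (L div c j)) + (\<Sum>j\<le>n. c j * (a j mod (L div c j)))"
proof -
  have "c j * a j = L * (a j div (L div c j)) + c j * (a j mod (L div c j))" if "j \<le> n" for j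
  proof -
    have "c j * (L div c j) = L" using assms that by simp
    then show ?thesis
      by (metis div_mult_mod_eq add_mult_distrib2 mult.assoc mult.commute)
  qed
  then show ?thesis by (simp add: sum.distrib sum_distrib_left)
qed

lemma finite_reduced_solutions: "finite (reduced_solutions n c L t)"
proof (rule finite_subset)
  show "reduced_solutions n c L t
      \<subseteq> {v. \<forall>j. (j \<in> {..n} \<longrightarrow> v j \<in> {..L}) \<and> (j \<notin> {..n} \<longrightarrow> v j = 0)}"
    by (auto simp: reduced_solutions_def weighted_solutions_def
        intro: less_imp_le order.trans[OF _ div_le_dividend])
qed (rule finite_set_of_finite_funs; simp)

lemma reduced_weight_bound:
  assumes dvd: "\<forall>j\<le>n. c j dvd L" and "0 < L" and v: "v \<in> reduced_solutions n c L t"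
  shows "t + (\<Sum>j\<le>n. c j) \<le> Suc n * L"
proof -
  have "t + (\<Sum>j\<le>n. c j) = (\<Sum>j\<le>n. c j * (v j + 1))"
    using v by (simp add: reduced_solutions_def weighted_solutions_def sum.distrib)
  also have "\<dots> \<le> (\<Sum>j\<le>n. c j * (L div c j))"
    using v by (intro sum_mono mult_left_mono) (auto simp: reduced_solutions_def)
  also have "\<dots> = Suc n * L" using dvd by simp
  finally show ?thesis .
qed

lemma reduced_solutions_eq_empty:
  assumes dvd: "\<forall>j\<le>n. c j dvd L" and L: "0 < L"
    and split: "Suc n * L = (\<Sum>j\<le>n. c j) + (L * N + N')" and "N' < L" and "N < i"
  shows "reduced_solutions n c L (L * i + l) = {}"
proof (rule ccontr)
  assume "reduced_solutions n c L (L * i + l) \<noteq> {}"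
  then obtain v where "v \<in> reduced_solutions n c L (L * i + l)" by blast
  with dvd L have "L * i + l + (\<Sum>j\<le>n. c j) \<le> Suc n * L" by (rule reduced_weight_bound)
  moreover have "L * Suc N = L * N + L" by simp
  ultimately have "L * i < L * Suc N" using split \<open>N' < L\<close> by linarith
  then show False using \<open>N < i\<close> mult_less_cancel1 not_less_eq by blast
qed

lemma reduced_solution_recombine:
  assumes dvd: "\<forall>j\<le>n. c j dvd L" and v: "v \<in> reduced_solutions n c L t" and q: "\<forall>j>n. q j = 0"
  shows "(L div c j * q j + v j) mod (L div c j) = v j"
    and "(L div c j * q j + v j) div (L div c j) = q j"
    and "(\<lambda>j. L div c j * q j + v j) \<in> weighted_solutions n c (L * (\<Sum>j\<le>n. q j) + t)"
proof -
  have mod_div: "(L div c j * q j + v j) mod (L div c j) = v j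
      \<and> (L div c j * q j + v j) div (L div c j) = q j" for j
  proof (cases "j \<le> n")
    case True
    then have "v j < L div c j" using v by (simp add: reduced_solutions_def)
    then show ?thesis by simp
  next
    case False
    then show ?thesis using v q by (simp add: reduced_solutions_def weighted_solutions_def)
  qed
  then show "(L div c j * q j + v j) mod (L div c j) = v j"
    and "(L div c j * q j + v j) div (L div c j) = q j" by auto
  have "(\<Sum>j\<le>n. c j * (L div c j * q j + v j)) = L * (\<Sum>j\<le>n. q j) + (\<Sum>j\<le>n. c j * v j)"
    using weighted_sum_div_mod[OF dvd, of "\<lambda>j. L div c j * q j + v j"] mod_div by simp
  then show "(\<lambda>j. L div c j * q j + v j) \<in> weighted_solutions n c (L * (\<Sum>j\<le>n. q j) + t)"
    using v q by (simp add: weighted_solutions_def reduced_solutions_def)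
qed

lemma weighted_solution_div_mod:
  assumes dvd: "\<forall>j\<le>n. c j dvd L" and L: "0 < L" and l: "l < L"
    and a: "a \<in> weighted_solutions n c (L * k + l)"
  defines "i \<equiv> (\<Sum>j\<le>n. c j * (a j mod (L div c j))) div L"
  shows "i \<le> k" and "(\<lambda>j. a j mod (L div c j)) \<in> reduced_solutions n c L (L * i + l)"
    and "(\<lambda>j. a j div (L div c j)) \<in> weighted_solutions n (\<lambda>_. 1) (k - i)"
proof -
  define t where "t = (\<Sum>j\<le>n. c j * (a j mod (L div c j)))"
  define s where "s = (\<Sum>j\<le>n. a j div (L div c j))"
  have vanish: "\<forall>j>n. a j = 0" using a by (simp add: weighted_solutions_def)
  have split: "L * s + t = L * k + l"
    using a weighted_sum_div_mod[OF dvd, of a] by (simp add: weighted_solutions_def s_def t_def)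
  have "t mod L = (L * s + t) mod L" by simp
  also have "\<dots> = l" using split l by simp
  finally have t: "t = L * i + l" unfolding i_def t_def by (metis div_mult_mod_eq mult.commute)
  with split have "L * (s + i) = L * k" by (simp add: add_mult_distrib2)
  then have "s + i = k" using L by simp
  then show "i \<le> k" and "(\<lambda>j. a j div (L div c j)) \<in> weighted_solutions n (\<lambda>_. 1) (k - i)"
    using vanish by (auto simp: weighted_solutions_def s_def)
  have "a j mod (L div c j) < L div c j" if "j \<le> n" for j
    using dvd L that by (metis mod_less_divisor dvd_div_mult_self mult_0 neq0_conv)
  then show "(\<lambda>j. a j mod (L div c j)) \<in> reduced_solutions n c L (L * i + l)"
    using vanish t by (simp add: reduced_solutions_def weighted_solutions_def t_def)
qed

lemma card_weighted_solutions_eq_sum_reduced: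
  assumes dvd: "\<forall>j\<le>n. c j dvd L" and L: "0 < L" and l: "l < L"
  shows "card (weighted_solutions n c (L * k + l))
    = (\<Sum>i\<le>k. card (reduced_solutions n c L (L * i + l)) * ((k - i + n) choose n))"
proof -
  define A where "A = weighted_solutions n c (L * k + l)"
  define B where "B = (SIGMA i:{..k}. reduced_solutions n c L (L * i + l)
                                    \<times> weighted_solutions n (\<lambda>_. 1) (k - i))"
  define f where "f a = ((\<Sum>j\<le>n. c j * (a j mod (L div c j))) div L,
                        \<lambda>j. a j mod (L div c j), \<lambda>j. a j div (L div c j))" for a :: "nat \<Rightarrow> nat"
  define g where "g = (\<lambda>(i :: nat, v, q) j. (L div c j) * q j + v j :: nat)"
  have "bij_betw f A B"
  proof (rule bij_betw_byWitness[of A g f B])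
    show "\<forall>a\<in>A. g (f a) = a" unfolding f_def g_def by (simp only: prod.case mult_div_mod_eq) simp
    show "f ` A \<subseteq> B"
      using weighted_solution_div_mod[OF dvd L l] by (auto simp: A_def B_def f_def)
    show "\<forall>x\<in>B. f (g x) = x" and "g ` B \<subseteq> A"
    proof safe
      fix i v q assume "(i, v, q) \<in> B"
      then have i: "i \<le> k" and v: "v \<in> reduced_solutions n c L (L * i + l)"
        and q: "q \<in> weighted_solutions n (\<lambda>_. 1) (k - i)"
        by (auto simp: B_def)
      have q0: "\<forall>j>n. q j = 0" using q by (simp add: weighted_solutions_def)
      note recombine = reduced_solution_recombine[OF dvd v q0]
      have gx: "g (i, v, q) = (\<lambda>j. L div c j * q j + v j)" by (simp add: g_def)
      have "(\<Sum>j\<le>n. c j * v j) = L * i + l"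
        using v by (simp add: reduced_solutions_def weighted_solutions_def)
      then show "f (g (i, v, q)) = (i, v, q)"
        unfolding f_def gx recombine(1,2) using l by simp
      have "L * (\<Sum>j\<le>n. q j) + (L * i + l) = L * k + l"
        using q i by (simp add: weighted_solutions_def flip: add_mult_distrib2)
      then show "g (i, v, q) \<in> A"
        using recombine(3) unfolding A_def gx by metis
    qed
  qed
  then have "card A = card B" by (rule bij_betw_same_card)
  also have "\<dots> = (\<Sum>i\<le>k. card (reduced_solutions n c L (L * i + l))
                          * card (weighted_solutions n (\<lambda>_. 1) (k - i)))"
  proof -
    have "finite (weighted_solutions n (\<lambda>_. 1) s)" for s
      by (rule card_ge_0_finite) (unfold card_weighted_solutions_unit, simp)
    then show ?thesis
      unfolding B_def by (simp add: card_cartesian_product finite_reduced_solutions)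
  qed
  finally show ?thesis unfolding A_def card_weighted_solutions_unit .
qed

lemma sum_binomial_truncate:
  fixes D :: "nat \<Rightarrow> nat"
  assumes D: "\<forall>i>N. D i = 0" and "N \<le> n"
  shows "(\<Sum>i\<le>k. D i * ((k - i + n) choose n)) = (\<Sum>i=0..N. D i * ((n - i + k) choose n))"
proof -
  have "(\<Sum>i\<le>k. D i * ((k - i + n) choose n)) = (\<Sum>i\<le>min k N. D i * ((k - i + n) choose n))"
    using D by (intro sum.mono_neutral_right) auto
  also have "\<dots> = (\<Sum>i\<le>min k N. D i * ((n - i + k) choose n))"
    using \<open>N \<le> n\<close> by (intro sum.cong) (auto simp: add.commute)
  also have "\<dots> = (\<Sum>i=0..N. D i * ((n - i + k) choose n))"
    using \<open>N \<le> n\<close> by (intro sum.mono_neutral_left) auto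
  finally show ?thesis .
qed

lemma sum_fun_upd_0_mult:
  fixes m a :: "nat \<Rightarrow> nat"
  shows "(\<Sum>j\<le>n. (m(0 := 1)) j * a j) = a 0 + (\<Sum>j=1..n. m j * a j)"
  unfolding sum_atMost_split_0[of _ n] by simp

lemma num_solutions_eq_card_weighted_solutions:
  "num_solutions n m M = card (weighted_solutions n (m(0 := 1)) M)"
  unfolding num_solutions_def weighted_solutions_def sum_fun_upd_0_mult ..

lemma d_coeff_eq_card_reduced_solutions:
  "d_coeff n m L l i = card (reduced_solutions n (m(0 := 1)) L (L * i + l))"
proof -
  have "(\<forall>j\<le>n. P j) \<longleftrightarrow> P 0 \<and> (\<forall>j\<in>{1..n}. P j)" for P
    by (auto simp: Suc_le_eq)
  then show ?thesis
    unfolding d_coeff_def reduced_solutions_def weighted_solutions_def sum_fun_upd_0_mult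
    by (auto intro!: arg_cong[where f = card])
qed

theorem proposition3p2:
  fixes n M k l N N' L :: nat and m :: "nat \<Rightarrow> nat"
  assumes pos: "\<forall>j\<in>{1..n}. m j \<ge> 1"
    and L_def: "L = Lcm (m ` {1..n})"
    and M_eq: "M = L * k + l" and l_lt: "l < L"
    and N_eq: "int ((n + 1) * L) - int (1 + (\<Sum>j=1..n. m j)) = int (L * N + N')"
    and N'_lt: "N' < L"
  shows "num_solutions n m M = (\<Sum>i=0..N. d_coeff n m L l i * ((n - i + k) choose n))"
proof -
  define c where "c = m(0 := 1)"
  have "0 \<notin> m ` {1..n}" using pos by force
  then have L_pos: "0 < L" using L_def by (metis Lcm_0_iff finite_atLeastAtMost finite_imageI gr0I)
  have dvd: "\<forall>j\<le>n. c j dvd L" using L_def by (auto simp: c_def dvd_Lcm)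
  have "(n + 1) * L = 1 + (\<Sum>j=1..n. m j) + (L * N + N')" using N_eq by linarith
  moreover have sum_c: "(\<Sum>j\<le>n. c j) = 1 + (\<Sum>j=1..n. m j)"
    by (simp add: sum_atMost_split_0 c_def)
  ultimately have split: "Suc n * L = (\<Sum>j\<le>n. c j) + (L * N + N')" by simp
  have d_coeff: "d_coeff n m L l i = card (reduced_solutions n c L (L * i + l))" for i
    unfolding c_def by (rule d_coeff_eq_card_reduced_solutions)
  have D: "\<forall>i>N. d_coeff n m L l i = 0"
    using reduced_solutions_eq_empty[OF dvd L_pos split N'_lt] by (simp add: d_coeff)
  have "L * N < L * Suc n" using split sum_c by (simp add: mult.commute)
  then have "N \<le> n" using mult_less_cancel1 less_Suc_eq_le by blast
  have "num_solutions n m M = card (weighted_solutions n c (L * k + l))"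
    unfolding c_def M_eq by (rule num_solutions_eq_card_weighted_solutions)
  also have "\<dots> = (\<Sum>i\<le>k. d_coeff n m L l i * ((k - i + n) choose n))"
    unfolding d_coeff by (rule card_weighted_solutions_eq_sum_reduced[OF dvd L_pos l_lt])
  also have "\<dots> = (\<Sum>i=0..N. d_coeff n m L l i * ((n - i + k) choose n))"
    using sum_binomial_truncate[OF D \<open>N \<le> n\<close>] .
  finally show ?thesis .
qed

end
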